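(* Let $n\ge1$ be even and let $\mathcal{D}_{S_1},\mathcal{D}_{S_2}\subseteq\mathcal{D}_{[n]}\setminus\{n\}$ be such that $\mathrm{ICG}(n,\mathcal{D}_{S_1})$ and $\mathrm{ICG}(n,\mathcal{D}_{S_2})$ are isospectral. Then (a) $\sum_{d\in\mathcal{D}_{S_1},\ d\text{ odd}}\phi(n/d)=\sum_{d\in\mathcal{D}_{S_2},\ d\text{ odd}}\phi(n/d)$, and (b) $\sum_{d\in\mathcal{D}_{S_1},\ d\text{ even}}\phi(n/d)=\sum_{d\in\mathcal{D}_{S_2},\ d\text{ even}}\phi(n/d)$.
   Context: Identify $\mathbb{Z}_n$ with $[n]=\{1,\dots,n\}$. For a divisor $d$ of $n$, $G_n(d)=\{j\in[n]:\gcd(j,n)=d\}$; $\mathcal{D}_{[n]}$ is the set of positive divisors of $n$. For $\mathcal{D}\subseteq\mathcal{D}_{[n]}\setminus\{n\}$, $\mathrm{ICG}(n,\mathcal{D})=\mathrm{Cay}(\mathbb{Z}_n,S)$ with $S=\bigcup_{d\in\mathcal{D}}G_n(d)$, and $\mathcal{D}=\mathcal{D}_S$. $\phi$ is Euler's totient function. Isospectral means having the same multiset of adjacency eigenvalues. *)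

theory Defs
  imports "HOL-Number_Theory.Number_Theory" "Jordan_Normal_Form.Char_Poly"
begin

text \<open>Z_n is identified with [n] = {1..n}; G_n(d) = {j in [n]. gcd j n = d}.\<close>
definition G :: "nat \<Rightarrow> nat \<Rightarrow> nat set" where
  "G n d = {j \<in> {1..n}. gcd j n = d}"

definition divisors_of :: "nat \<Rightarrow> nat set" where
  "divisors_of n = {d. d dvd n}"

definition ICG_set :: "nat \<Rightarrow> nat set \<Rightarrow> nat set" where
  "ICG_set n D = (\<Union>d\<in>D. G n d)"

text \<open>Adjacency matrix of the Cayley graph Cay(Z_n, S); vertices are residues
  represented by 0..n-1, and x ~ y iff y - x (mod n) lies in S.\<close>
definition cayley_adj :: "nat \<Rightarrow> nat set \<Rightarrow> complex mat" where
  "cayley_adj n S = mat n n (\<lambda>(x, y). if (\<exists>s\<in>S. (x + s) mod n = y mod n) then 1 else 0)"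

definition ICG_adj :: "nat \<Rightarrow> nat set \<Rightarrow> complex mat" where
  "ICG_adj n D = cayley_adj n (ICG_set n D)"

definition eigenvalue_mset :: "complex mat \<Rightarrow> complex multiset" where
  "eigenvalue_mset A = proots (char_poly A)"

definition isospectral :: "complex mat \<Rightarrow> complex mat \<Rightarrow> bool" where
  "isospectral A B \<longleftrightarrow> eigenvalue_mset A = eigenvalue_mset B"

end

theory Submission
  imports Defs "HOL-Analysis.Complex_Transcendental"
begin

text \<open>The Fourier matrix of the cyclic group diagonalizes the adjacency matrix of every Cayley
  graph \<open>Cay(\<int>\<^sub>n, S)\<close>; its eigenvalues are the character sums
  \<open>\<lambda> j = (\<Sum>s\<in>S. \<omega> ^ (j * s))\<close> for \<open>j < n\<close>. Since \<open>\<lambda> 0 = |S|\<close> has the largest real part, the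
  spectrum determines \<open>|S|\<close>. For symmetric \<open>S\<close> we have \<open>\<lambda> (n - j) = \<lambda> j\<close>, so for even \<open>n\<close>
  every eigenvalue apart from \<open>\<lambda> 0\<close> and \<open>\<lambda> (n/2)\<close> is listed an even number of times, and a
  parity count shows that the spectrum also determines \<open>\<lambda> (n/2) = |S| - 2 |{s \<in> S. odd s}|\<close>.
  Finally, for \<open>S = (\<Union>d\<in>D. G n d)\<close> the parity of \<open>s\<close> is that of \<open>gcd s n\<close>, and
  \<open>|G n d| = \<phi>(n/d)\<close>.\<close>

definition unity_root :: "nat \<Rightarrow> complex" where
  "unity_root n = exp (2 * of_real pi * \<i> / of_nat n)"

lemma unity_root_pow: "unity_root n ^ k = exp (2 * of_real pi * \<i> * of_nat k / of_nat n)"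
  unfolding unity_root_def by (simp add: exp_of_nat_mult[symmetric] mult.commute)

lemma unity_root_pow_eq_1_iff: "n \<ge> 1 \<Longrightarrow> unity_root n ^ k = 1 \<longleftrightarrow> n dvd k"
  using complex_root_unity_eq_1[of n k] by (simp add: unity_root_pow)

lemma unity_root_pow_mod:
  assumes "n \<ge> 1" shows "unity_root n ^ (k mod n) = unity_root n ^ k"
proof -
  have "unity_root n ^ k = (unity_root n ^ n) ^ (k div n) * unity_root n ^ (k mod n)"
    by (simp only: power_mult[symmetric] power_add[symmetric] mult_div_mod_eq)
  moreover have "unity_root n ^ n = 1" using assms by (simp add: unity_root_pow_eq_1_iff)
  ultimately show ?thesis by (simp only: power_one mult_1)
qed

lemma norm_unity_root_pow [simp]: "norm (unity_root n ^ k) = 1"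
  by (simp add: unity_root_pow)

lemma unity_root_pow_diff:
  assumes "n \<ge> 1" "k \<le> n"
  shows "unity_root n ^ (n - k) = inverse (unity_root n ^ k)"
proof -
  have "unity_root n ^ k * unity_root n ^ (n - k) = 1"
    using assms by (simp add: power_add[symmetric] unity_root_pow_eq_1_iff)
  then show ?thesis by (rule inverse_unique[symmetric])
qed

lemma unity_root_pow_half:
  assumes "n \<ge> 1" "even n"
  shows "unity_root n ^ (n div 2) = -1"
proof -
  have "(unity_root n ^ (n div 2)) ^ 2 = 1"
    using assms by (simp add: power_mult[symmetric] unity_root_pow_eq_1_iff)
  moreover have "unity_root n ^ (n div 2) \<noteq> 1"
    using assms by (auto simp: unity_root_pow_eq_1_iff dest: dvd_imp_le)
  ultimately show ?thesis by (simp add: power2_eq_1_iff)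
qed

definition dft_mat :: "nat \<Rightarrow> complex mat" where
  "dft_mat n = Matrix.mat n n (\<lambda>(i, j). unity_root n ^ (i * j))"

definition idft_mat :: "nat \<Rightarrow> complex mat" where
  "idft_mat n = Matrix.mat n n (\<lambda>(i, j). unity_root n ^ (i * (n - j)) / of_nat n)"

lemma dft_mat_mult_idft_mat:
  assumes n: "n \<ge> 1"
  shows "dft_mat n * idft_mat n = 1\<^sub>m n"
proof (rule eq_matI)
  fix x y assume "x < dim_row (1\<^sub>m n :: complex mat)" "y < dim_col (1\<^sub>m n :: complex mat)"
  then have x: "x < n" and y: "y < n" by auto
  define z where "z = unity_root n ^ (x + (n - y))"
  have "unity_root n ^ (x * j) * unity_root n ^ (j * (n - y)) = z ^ j" for j
    unfolding z_def by (simp add: power_add[symmetric] power_mult[symmetric] add_mult_distrib2 mult.commute)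
  then have "(dft_mat n * idft_mat n) $$ (x, y) = (\<Sum>j<n. z ^ j) / of_nat n"
    using x y by (simp add: dft_mat_def idft_mat_def scalar_prod_def lessThan_atLeast0
        sum_divide_distrib)
  also have "\<dots> = 1\<^sub>m n $$ (x, y)"
  proof (cases "x = y")
    case True
    then have "z = 1" using y n by (simp add: z_def unity_root_pow_eq_1_iff)
    then show ?thesis using True x n by simp
  next
    case False
    have "\<not> n dvd x + (n - y)"
    proof
      assume "n dvd x + (n - y)"
      then obtain c where c: "x + (n - y) = n * c" ..
      then have "n * c < n * 2" "n * 0 < n * c" using x y by arith+
      then have "c = 1" by auto
      then show False using c False y by simp
    qed
    then have "z \<noteq> 1" using n by (simp add: z_def unity_root_pow_eq_1_iff)
    moreover have "z ^ n = 1" using n by (simp add: z_def power_mult[symmetric] unity_root_pow_eq_1_iff)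
    ultimately show ?thesis using False x y by (simp add: geometric_sum)
  qed
  finally show "(dft_mat n * idft_mat n) $$ (x, y) = 1\<^sub>m n $$ (x, y)" .
qed (auto simp: dft_mat_def idft_mat_def)

definition cayley_eigenvalue :: "nat \<Rightarrow> nat set \<Rightarrow> nat \<Rightarrow> complex" where
  "cayley_eigenvalue n S j = (\<Sum>s\<in>S. unity_root n ^ (j * s))"

lemma cayley_adj_mult_dft_mat:
  assumes n: "n \<ge> 1" and S: "S \<subseteq> {..<n}"
  shows "cayley_adj n S * dft_mat n = dft_mat n * mat_diag n (cayley_eigenvalue n S)"
proof (rule eq_matI)
  fix x j assume "x < dim_row (dft_mat n * mat_diag n (cayley_eigenvalue n S))"
    "j < dim_col (dft_mat n * mat_diag n (cayley_eigenvalue n S))"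
  then have x: "x < n" and j: "j < n" by (auto simp: dft_mat_def mat_diag_def)
  let ?shift = "\<lambda>s. (x + s) mod n"
  have inj: "inj_on ?shift S"
  proof
    fix a b assume "a \<in> S" "b \<in> S" "?shift a = ?shift b"
    moreover from this have "a mod n = b mod n"
      using cong_add_lcancel_nat[of x a b n] by (simp add: cong_def)
    ultimately show "a = b" using S by (auto simp: subset_eq)
  qed
  have nbrs: "{y \<in> {0..<n}. \<exists>s\<in>S. ?shift s = y mod n} = ?shift ` S"
    using n by auto
  have "(cayley_adj n S * dft_mat n) $$ (x, j) =
      (\<Sum>y\<in>{0..<n}. (if \<exists>s\<in>S. ?shift s = y mod n then 1 else 0) * unity_root n ^ (y * j))"
    using x j by (simp add: cayley_adj_def dft_mat_def scalar_prod_def)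
  also have "\<dots> = (\<Sum>y\<in>{0..<n}. if \<exists>s\<in>S. ?shift s = y mod n then unity_root n ^ (y * j) else 0)"
    by (intro sum.cong) auto
  also have "\<dots> = (\<Sum>y\<in>{y \<in> {0..<n}. \<exists>s\<in>S. ?shift s = y mod n}. unity_root n ^ (y * j))"
    by (rule sum.inter_filter[symmetric]) simp
  also have "\<dots> = (\<Sum>s\<in>S. unity_root n ^ (?shift s * j))"
    unfolding nbrs by (simp add: sum.reindex[OF inj])
  also have "\<dots> = (\<Sum>s\<in>S. unity_root n ^ ((x + s) * j))"
    using n by (intro sum.cong refl) (simp only: power_mult unity_root_pow_mod)
  also have "\<dots> = (\<Sum>s\<in>S. unity_root n ^ (x * j) * unity_root n ^ (j * s))"
    by (simp add: power_add[symmetric] algebra_simps)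
  also have "\<dots> = (dft_mat n * mat_diag n (cayley_eigenvalue n S)) $$ (x, j)"
    using x j by (simp add: mat_diag_mult_right[of _ n n] carrier_matD[OF mat_diag_dim] dft_mat_def
        cayley_eigenvalue_def sum_distrib_left)
  finally show "(cayley_adj n S * dft_mat n) $$ (x, j) =
      (dft_mat n * mat_diag n (cayley_eigenvalue n S)) $$ (x, j)" .
qed (auto simp: dft_mat_def cayley_adj_def mat_diag_def)

lemma proots_prod_list_linear: "proots (\<Prod>a\<leftarrow>xs. [:- a, 1:]) = mset (xs :: complex list)"
proof (induction xs)
  case (Cons a xs)
  have "proots ([:- a, 1:] * (\<Prod>a\<leftarrow>xs. [:- a, 1:])) = add_mset a (proots (\<Prod>a\<leftarrow>xs. [:- a, 1:]))"
    by (subst proots_mult) (auto simp del: mult_pCons_left)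
  with Cons show ?case by (simp del: mult_pCons_left)
qed simp

lemma eigenvalue_mset_cayley_adj:
  assumes n: "n \<ge> 1" and S: "S \<subseteq> {..<n}"
  shows "eigenvalue_mset (cayley_adj n S) = mset (map (cayley_eigenvalue n S) [0..<n])"
proof -
  let ?A = "cayley_adj n S" and ?F = "dft_mat n" and ?G = "idft_mat n"
    and ?D = "mat_diag n (cayley_eigenvalue n S)"
  have carrier: "?A \<in> carrier_mat n n" "?D \<in> carrier_mat n n" "?F \<in> carrier_mat n n"
    "?G \<in> carrier_mat n n"
    by (auto simp: cayley_adj_def dft_mat_def idft_mat_def)
  have FG: "?F * ?G = 1\<^sub>m n" by (rule dft_mat_mult_idft_mat[OF n])
  have GF: "?G * ?F = 1\<^sub>m n" by (rule mat_mult_left_right_inverse[OF carrier(3,4) FG])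
  have "?A = ?A * (?F * ?G)" using carrier by (simp add: FG)
  also have "\<dots> = (?A * ?F) * ?G" using carrier by simp
  also have "\<dots> = ?F * ?D * ?G" by (simp add: cayley_adj_mult_dft_mat[OF n S])
  finally have diagonalization: "?A = ?F * ?D * ?G" .
  have "similar_mat ?A ?D"
    using carrier by (intro similar_matI[OF _ FG GF diagonalization]) auto
  then have "char_poly ?A = char_poly ?D" by (rule char_poly_similar)
  also have "\<dots> = (\<Prod>a\<leftarrow>map (cayley_eigenvalue n S) [0..<n]. [:- a, 1:])"
    by (subst char_poly_upper_triangular[of _ n])
       (auto simp: upper_triangular_def diag_mat_def mat_diag_def intro!: arg_cong[of _ _ prod_list])
  finally show ?thesis unfolding eigenvalue_mset_def by (simp only: proots_prod_list_linear)
qed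

lemma cayley_eigenvalue_0 [simp]: "cayley_eigenvalue n S 0 = of_nat (card S)"
  by (simp add: cayley_eigenvalue_def)

lemma Re_cayley_eigenvalue_le: "Re (cayley_eigenvalue n S j) \<le> card S"
proof -
  have "Re (cayley_eigenvalue n S j) = (\<Sum>s\<in>S. Re (unity_root n ^ (j * s)))"
    by (simp add: cayley_eigenvalue_def)
  also have "\<dots> \<le> (\<Sum>s\<in>S. 1)"
    by (intro sum_mono) (metis complex_Re_le_cmod norm_unity_root_pow)
  finally show ?thesis by simp
qed

definition cayley_connection_set :: "nat \<Rightarrow> nat set \<Rightarrow> bool" where
  "cayley_connection_set n S \<longleftrightarrow> S \<subseteq> {1..<n} \<and> (\<forall>s\<in>S. n - s \<in> S)"

lemma cayley_eigenvalue_diff: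
  assumes n: "n \<ge> 1" and S: "cayley_connection_set n S" and j: "j \<le> n"
  shows "cayley_eigenvalue n S (n - j) = cayley_eigenvalue n S j"
proof -
  have "cayley_eigenvalue n S (n - j) = (\<Sum>s\<in>S. inverse (unity_root n ^ (j * s)))"
    unfolding cayley_eigenvalue_def
    by (intro sum.cong refl) (simp add: power_mult unity_root_pow_diff[OF n j] power_inverse)
  also have "\<dots> = (\<Sum>s\<in>S. unity_root n ^ (j * (n - s)))"
    using S n unfolding cayley_connection_set_def
    by (intro sum.cong refl) (auto simp: mult.commute[of j] power_mult unity_root_pow_diff power_inverse)
  also have "\<dots> = cayley_eigenvalue n S j"
    unfolding cayley_eigenvalue_def
    by (rule sum.reindex_bij_witness[where i = "\<lambda>s. n - s" and j = "\<lambda>s. n - s"])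
       (use S in \<open>auto simp: cayley_connection_set_def\<close>)
  finally show ?thesis .
qed

lemma cayley_eigenvalue_half:
  assumes "n \<ge> 1" "even n" "finite S"
  shows "cayley_eigenvalue n S (n div 2) = of_nat (card S) - 2 * of_nat (card {s\<in>S. odd s})"
proof -
  have "cayley_eigenvalue n S (n div 2) = (\<Sum>s\<in>S. 1 - 2 * of_bool (odd s))"
    unfolding cayley_eigenvalue_def
    by (intro sum.cong refl) (simp add: power_mult unity_root_pow_half[OF assms(1,2)])
  moreover have "S \<inter> {s. odd s} = {s\<in>S. odd s}" by blast
  ultimately show ?thesis
    using assms(3) by (simp add: sum_subtractf sum_distrib_left[symmetric])
qed

lemma mset_map_upt_symmetric:
  fixes f :: "nat \<Rightarrow> 'a"
  assumes nh: "n = 2 * h" and h: "h \<ge> 1" and sym: "\<And>j. j \<le> n \<Longrightarrow> f (n - j) = f j"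
  shows "mset (map f [0..<n]) =
    add_mset (f 0) (add_mset (f h) (mset (map f [1..<h]) + mset (map f [1..<h])))"
proof -
  have "[0..<n] = [0..<h] @ [h..<n]" using nh upt_add_eq_append[of 0 h h] by (simp add: mult_2)
  moreover have "[0..<h] = 0 # [1..<h]" "[h..<n] = h # [h+1..<n]" using nh h by (simp_all add: upt_conv_Cons)
  ultimately have split: "[0..<n] = 0 # [1..<h] @ h # [h+1..<n]" by simp
  have "bij_betw (\<lambda>j. n - j) {1..<h} {h+1..<n}"
    by (rule bij_betw_byWitness[where f' = "\<lambda>j. n - j"]) (use nh in auto)
  then have inj: "inj_on (\<lambda>j. n - j) {1..<h}" and im: "(\<lambda>j. n - j) ` {1..<h} = {h+1..<n}"
    by (simp_all add: bij_betw_def)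
  have "mset (map f [h+1..<n]) = image_mset f (mset_set ((\<lambda>j. n - j) ` {1..<h}))"
    unfolding im by simp
  also have "\<dots> = image_mset (\<lambda>j. f (n - j)) (mset_set {1..<h})"
    by (subst image_mset_mset_set[OF inj, symmetric]) (simp add: image_mset.compositionality o_def)
  also have "\<dots> = image_mset f (mset_set {1..<h})"
    by (intro image_mset_cong sym) (use nh in auto)
  also have "\<dots> = mset (map f [1..<h])"
    by simp
  finally show ?thesis unfolding split by simp
qed

lemma add_mset_double_eq_imp_eq:
  assumes "add_mset x (M + M) = add_mset y (N + N)"
  shows "x = y"
proof (rule ccontr)
  assume "x \<noteq> y"
  with assms have "Suc (count M x + count M x) = count N x + count N x"
    by (metis count_add_mset count_union)
  then show False by presburger
qed

lemma isospectral_cayley_adj_card_eq: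
  assumes n: "n \<ge> 1" and S: "S \<subseteq> {..<n}" "T \<subseteq> {..<n}"
    and iso: "isospectral (cayley_adj n S) (cayley_adj n T)"
  shows "card S = card T"
proof -
  have le: "card A \<le> card B" if "A \<subseteq> {..<n}" "B \<subseteq> {..<n}"
    and AB: "isospectral (cayley_adj n A) (cayley_adj n B)" for A B
  proof -
    have "cayley_eigenvalue n A 0 \<in># eigenvalue_mset (cayley_adj n A)"
      using n that by (auto simp: eigenvalue_mset_cayley_adj intro!: rev_image_eqI[of 0])
    also have "eigenvalue_mset (cayley_adj n A) = mset (map (cayley_eigenvalue n B) [0..<n])"
      using AB n that by (simp add: isospectral_def eigenvalue_mset_cayley_adj)
    finally obtain j where "cayley_eigenvalue n B j = of_nat (card A)" by auto
    then have "card A = Re (cayley_eigenvalue n B j)" by simp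
    also have "\<dots> \<le> card B" by (rule Re_cayley_eigenvalue_le)
    finally show ?thesis by simp
  qed
  from le[OF S iso] le[OF S(2,1)] iso show ?thesis by (simp add: isospectral_def)
qed

lemma isospectral_cayley_adj_card_odd_eq:
  assumes n: "n \<ge> 1" "even n"
    and S: "cayley_connection_set n S" "cayley_connection_set n T"
    and iso: "isospectral (cayley_adj n S) (cayley_adj n T)"
  shows "card {s\<in>S. odd s} = card {s\<in>T. odd s}"
proof -
  obtain h where h: "n = 2 * h" "h \<ge> 1" using n by (auto elim!: evenE)
  have sub: "S \<subseteq> {..<n}" "T \<subseteq> {..<n}" and fin: "finite S" "finite T"
    using S by (auto simp: cayley_connection_set_def intro: finite_subset)
  have card: "card S = card T" by (rule isospectral_cayley_adj_card_eq[OF n(1) sub iso])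
  define M where "M X = mset (map (cayley_eigenvalue n X) [1..<h])" for X
  have split: "mset (map (cayley_eigenvalue n X) [0..<n]) =
      add_mset (cayley_eigenvalue n X 0) (add_mset (cayley_eigenvalue n X h) (M X + M X))"
    if "cayley_connection_set n X" for X
    unfolding M_def by (rule mset_map_upt_symmetric[OF h]) (rule cayley_eigenvalue_diff[OF n(1) that])
  have spectra: "mset (map (cayley_eigenvalue n S) [0..<n]) = mset (map (cayley_eigenvalue n T) [0..<n])"
    using iso unfolding isospectral_def eigenvalue_mset_cayley_adj[OF n(1) sub(1)]
      eigenvalue_mset_cayley_adj[OF n(1) sub(2)] .
  have "add_mset (cayley_eigenvalue n S h) (M S + M S) = add_mset (cayley_eigenvalue n T h) (M T + M T)"
    using spectra[unfolded split[OF S(1)] split[OF S(2)] cayley_eigenvalue_0 card] by simp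
  then have "cayley_eigenvalue n S h = cayley_eigenvalue n T h" by (rule add_mset_double_eq_imp_eq)
  then show ?thesis
    using cayley_eigenvalue_half[OF n fin(1)] cayley_eigenvalue_half[OF n fin(2)] card h by simp
qed

lemma card_filter_add_card_filter_not:
  "finite A \<Longrightarrow> card {x\<in>A. P x} + card {x\<in>A. \<not> P x} = card A"
  by (subst card_Un_disjoint[symmetric]) (auto intro: arg_cong[of _ _ card])

lemma card_G: "n \<ge> 1 \<Longrightarrow> d dvd n \<Longrightarrow> card (G n d) = totient (n div d)"
  using card_gcd_eq_totient[of n d] by (simp add: G_def greaterThanAtMost_def atLeastAtMost_def
      atLeast_def greaterThan_def Suc_le_eq)

lemma card_ICG_set_filter:
  assumes n: "n \<ge> 1" and D: "D \<subseteq> divisors_of n" and P: "\<And>s. P (gcd s n) \<longleftrightarrow> P s"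
  shows "card {s \<in> ICG_set n D. P s} = (\<Sum>d\<in>{d\<in>D. P d}. totient (n div d))"
proof -
  have "finite D"
    using D n by (auto intro: finite_subset[of D "{d. d dvd n}"] simp: divisors_of_def)
  have "{s \<in> ICG_set n D. P s} = (\<Union>d\<in>{d\<in>D. P d}. G n d)"
    using P unfolding ICG_set_def G_def by blast
  also have "card \<dots> = (\<Sum>d\<in>{d\<in>D. P d}. card (G n d))"
    using \<open>finite D\<close> by (intro card_UN_disjoint) (auto simp: G_def)
  also have "\<dots> = (\<Sum>d\<in>{d\<in>D. P d}. totient (n div d))"
    using D n by (intro sum.cong refl card_G) (auto simp: divisors_of_def)
  finally show ?thesis .
qed

lemma cayley_connection_set_ICG_set:
  assumes "D \<subseteq> divisors_of n - {n}"
  shows "cayley_connection_set n (ICG_set n D)"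
  unfolding cayley_connection_set_def
proof safe
  fix s assume "s \<in> ICG_set n D"
  then obtain d where d: "d \<in> D" "s \<in> {1..n}" "gcd s n = d" by (auto simp: ICG_set_def G_def)
  then have "s \<noteq> n" using assms by auto
  with d show "s \<in> {1..<n}" by simp
  with d have "n - s \<in> {1..n}" "gcd (n - s) n = d" by (auto simp: gcd_diff2_nat)
  with d show "n - s \<in> ICG_set n D" by (auto simp: ICG_set_def G_def)
qed

theorem corollary2p7:
  fixes n :: nat and D1 D2 :: "nat set"
  assumes "n \<ge> 1" and "even n"
    and "D1 \<subseteq> divisors_of n - {n}" and "D2 \<subseteq> divisors_of n - {n}"
    and "isospectral (ICG_adj n D1) (ICG_adj n D2)"
  shows "(\<Sum>d\<in>{d\<in>D1. odd d}. totient (n div d)) = (\<Sum>d\<in>{d\<in>D2. odd d}. totient (n div d)) \<and>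
         (\<Sum>d\<in>{d\<in>D1. even d}. totient (n div d)) = (\<Sum>d\<in>{d\<in>D2. even d}. totient (n div d))"
proof -
  let ?S1 = "ICG_set n D1" and ?S2 = "ICG_set n D2"
  have conn: "cayley_connection_set n ?S1" "cayley_connection_set n ?S2"
    using assms(3,4) by (simp_all add: cayley_connection_set_ICG_set)
  then have sub: "?S1 \<subseteq> {..<n}" "?S2 \<subseteq> {..<n}" and fin: "finite ?S1" "finite ?S2"
    by (auto simp: cayley_connection_set_def intro: finite_subset)
  have iso: "isospectral (cayley_adj n ?S1) (cayley_adj n ?S2)"
    using assms(5) by (simp add: ICG_adj_def)
  have odd: "card {s\<in>?S1. odd s} = card {s\<in>?S2. odd s}"
    using isospectral_cayley_adj_card_odd_eq[OF assms(1,2) conn iso] .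
  moreover have "card ?S1 = card ?S2"
    using isospectral_cayley_adj_card_eq[OF assms(1) sub iso] .
  ultimately have even: "card {s\<in>?S1. even s} = card {s\<in>?S2. even s}"
    using card_filter_add_card_filter_not[OF fin(1), of even]
      card_filter_add_card_filter_not[OF fin(2), of even] by simp
  have D: "D1 \<subseteq> divisors_of n" "D2 \<subseteq> divisors_of n" using assms(3,4) by auto
  show ?thesis
    using odd even card_ICG_set_filter[OF assms(1) D(1), of odd]
      card_ICG_set_filter[OF assms(1) D(2), of odd] card_ICG_set_filter[OF assms(1) D(1), of even]
      card_ICG_set_filter[OF assms(1) D(2), of even]
    by (simp add: assms(2))
qed

end
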